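(* Let $G$ be a graph, $r\ge 1$, $L_S=(s_1,\dots,s_n)$ a subordering of $S\subseteq V(G)$, and $v\in V(G)\setminus S$. Let $L_{S\cup\{v\}}$ be any subordering of $S\cup\{v\}$ with $L_{S\cup\{v\}}[S]=L_S$. Then $$\mathrm{Wreach}_r(G,L_{S\cup\{v\}},v)\setminus\{v\}=\{s\in\mathrm{bp}(G,L_S,v) \mid s\preceq_{L_{S\cup\{v\}}} v\}.$$
   Context: All graphs are finite, undirected, without loops. A path has length equal to its number of vertices minus one. A subordering $L_S$ is a linear ordering of $S\subseteq V(G)$; $\preceq_{L_S}$ means precedes or equal; $L_{S'}[S]$ is the restriction of $L_{S'}$ to $S$. For a subordering $L_S$ and $u,w\in V(G)$, $u\in\mathrm{Wreach}_r(G,L_S,w)$ iff either $u=w$, or $u\in S$ and there is a path $P$ of length at most $r$ between $u$ and $w$ with $u\preceq_{L_S} x$ for all $x\in V(P)\cap S$. For $L_S=(s_1,\dots,s_n)$ and $v\notin S$: $\mathrm{placeafter}(L_S,s_i,v)=(s_1,\dots,s_i,v,s_{i+1},\dots,s_n)$ and $\mathrm{placebefore}(L_S,s_i,v)=(s_1,\dots,s_{i-1},v,s_i,\dots,s_n)$. A vertex $s\in S$ is a breakpoint of $v$ if $\mathrm{Wreach}_r(G,\mathrm{placebefore}(L_S,s,v),v)\ne\mathrm{Wreach}_r(G,\mathrm{placeafter}(L_S,s,v),v)$; $\mathrm{bp}(G,L_S,v)$ is the set of breakpoints of $v$. *)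

theory Defs
  imports Main
begin

definition graph :: "'a set \<Rightarrow> ('a \<Rightarrow> 'a \<Rightarrow> bool) \<Rightarrow> bool" where
  "graph V E \<longleftrightarrow> finite V \<and> (\<forall>x y. E x y \<longrightarrow> x \<in> V \<and> y \<in> V)
     \<and> (\<forall>x y. E x y \<longrightarrow> E y x) \<and> (\<forall>x. \<not> E x x)"

definition is_path :: "'a set \<Rightarrow> ('a \<Rightarrow> 'a \<Rightarrow> bool) \<Rightarrow> 'a list \<Rightarrow> bool" where
  "is_path V E P \<longleftrightarrow> P \<noteq> [] \<and> distinct P \<and> set P \<subseteq> V
     \<and> (\<forall>i. Suc i < length P \<longrightarrow> E (P ! i) (P ! Suc i))"

text \<open>Position of x in L (length L if absent).\<close>
fun pos :: "'a list \<Rightarrow> 'a \<Rightarrow> nat" where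
  "pos [] x = 0"
| "pos (y # ys) x = (if y = x then 0 else Suc (pos ys x))"

text \<open>A subordering of S is a distinct list L with set L = S.
 u precedes-or-equals x in L.\<close>
definition prec_eq :: "'a list \<Rightarrow> 'a \<Rightarrow> 'a \<Rightarrow> bool" where
  "prec_eq L u x \<longleftrightarrow> u \<in> set L \<and> x \<in> set L \<and> pos L u \<le> pos L x"

definition Wreach :: "'a set \<Rightarrow> ('a \<Rightarrow> 'a \<Rightarrow> bool) \<Rightarrow> nat \<Rightarrow> 'a list \<Rightarrow> 'a \<Rightarrow> 'a set" where
  "Wreach V E r L w = {u \<in> V. u = w \<or>
     (u \<in> set L \<and> (\<exists>P. is_path V E P \<and> hd P = u \<and> last P = w \<and> length P - 1 \<le> r
        \<and> (\<forall>x \<in> set P \<inter> set L. prec_eq L u x)))}"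

definition placeafter :: "'a list \<Rightarrow> 'a \<Rightarrow> 'a \<Rightarrow> 'a list" where
  "placeafter L s v = take (Suc (pos L s)) L @ v # drop (Suc (pos L s)) L"

definition placebefore :: "'a list \<Rightarrow> 'a \<Rightarrow> 'a \<Rightarrow> 'a list" where
  "placebefore L s v = take (pos L s) L @ v # drop (pos L s) L"

definition bp :: "'a set \<Rightarrow> ('a \<Rightarrow> 'a \<Rightarrow> bool) \<Rightarrow> nat \<Rightarrow> 'a list \<Rightarrow> 'a \<Rightarrow> 'a set" where
  "bp V E r L v = {s \<in> set L. Wreach V E r (placebefore L s v) v \<noteq> Wreach V E r (placeafter L s v) v}"

definition restrict_ord :: "'a list \<Rightarrow> 'a set \<Rightarrow> 'a list" where
  "restrict_ord L S = filter (\<lambda>x. x \<in> S) L"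

end

theory Submission
  imports Defs
begin

text \<open>Whether some u \<in> S lies in Wreach_r(G, L_{S\<union>{v}}, v) depends on two independent facts:
whether u reaches v by a path of length at most r that meets no vertex of S smaller than u
(a property of L_S alone), and whether u precedes v. Inserting v immediately before or
after s changes only the second fact, and only for s itself; so the breakpoints of v are
exactly the vertices of S satisfying the first fact, which gives the theorem.\<close>

definition wreach_path :: "'a set \<Rightarrow> ('a \<Rightarrow> 'a \<Rightarrow> bool) \<Rightarrow> nat \<Rightarrow> 'a list \<Rightarrow> 'a \<Rightarrow> 'a \<Rightarrow> bool" where
  "wreach_path V E r L u w \<longleftrightarrow> (\<exists>P. is_path V E P \<and> hd P = u \<and> last P = w \<and> length P - 1 \<le> r
     \<and> (\<forall>x \<in> set P \<inter> set L. pos L u \<le> pos L x))"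

lemma pos_filter_le_iff:
  assumes "x \<in> set M" "y \<in> set M" "P x" "P y"
  shows "pos (filter P M) x \<le> pos (filter P M) y \<longleftrightarrow> pos M x \<le> pos M y"
  using assms by (induction M) auto

lemma pos_append:
  "pos (xs @ ys) x = (if x \<in> set xs then pos xs x else length xs + pos ys x)"
  by (induction xs) auto

lemma pos_less_length: "x \<in> set xs \<Longrightarrow> pos xs x < length xs"
  by (induction xs) auto

lemma nth_pos: "x \<in> set xs \<Longrightarrow> xs ! pos xs x = x"
  by (induction xs) auto

lemma pos_eq_iff: "x \<in> set xs \<Longrightarrow> y \<in> set xs \<Longrightarrow> pos xs x = pos xs y \<longleftrightarrow> x = y"
  by (metis nth_pos)

lemma in_set_take_iff_pos_less: "x \<in> set xs \<Longrightarrow> x \<in> set (take k xs) \<longleftrightarrow> pos xs x < k"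
proof (induction xs arbitrary: k)
  case (Cons y ys)
  then show ?case by (cases k) auto
qed simp

lemma pos_insert_at_le_iff:
  assumes "v \<notin> set xs" "u \<in> set xs" "k \<le> length xs"
  shows "pos (take k xs @ v # drop k xs) u \<le> pos (take k xs @ v # drop k xs) v \<longleftrightarrow> pos xs u < k"
proof -
  have v_pos: "pos (take k xs @ v # drop k xs) v = k"
    using assms(1,3) by (auto simp: pos_append dest: in_set_takeD)
  show ?thesis
  proof (cases "u \<in> set (take k xs)")
    case True
    then have "pos (take k xs @ v # drop k xs) u < k"
      using pos_less_length[OF True] by (simp add: pos_append)
    then show ?thesis using v_pos True in_set_take_iff_pos_less[OF assms(2)] by simp
  next
    case False
    then have "pos (take k xs @ v # drop k xs) u > k"
      using assms by (auto simp: pos_append)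
    then show ?thesis using v_pos False in_set_take_iff_pos_less[OF assms(2)] by simp
  qed
qed

lemma Wreach_subset: "Wreach V E r L w \<subseteq> insert w (set L)"
  unfolding Wreach_def by auto

lemma Wreach_extension:
  assumes M: "filter (\<lambda>x. x \<in> set L) M = L" "set M = insert v (set L)"
    and "v \<notin> set L" "v \<in> V"
  shows "Wreach V E r M v = insert v {u \<in> set L. wreach_path V E r L u v \<and> pos M u \<le> pos M v}"
proof -
  have "u \<in> Wreach V E r M v \<longleftrightarrow> wreach_path V E r L u v \<and> pos M u \<le> pos M v"
    if u: "u \<in> set L" for u
  proof -
    have order_on_L: "pos M u \<le> pos M x \<longleftrightarrow> pos L u \<le> pos L x" if "x \<in> set L" for x
      using pos_filter_le_iff[of u M x "\<lambda>x. x \<in> set L"] M u that by auto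
    have prec_eq_iff: "(\<forall>x \<in> set P \<inter> set M. prec_eq M u x) \<longleftrightarrow>
        pos M u \<le> pos M v \<and> (\<forall>x \<in> set P \<inter> set L. pos L u \<le> pos L x)"
      if "P \<noteq> []" "last P = v" for P
      using that last_in_set[OF that(1)] M(2) u order_on_L unfolding prec_eq_def by auto
    have "u \<in> Wreach V E r M v \<longleftrightarrow> (\<exists>P. is_path V E P \<and> hd P = u \<and> last P = v
        \<and> length P - 1 \<le> r \<and> (\<forall>x \<in> set P \<inter> set M. prec_eq M u x))"
      using u assms(3) M(2) unfolding Wreach_def is_path_def by (auto 0 3)
    also have "\<dots> \<longleftrightarrow> wreach_path V E r L u v \<and> pos M u \<le> pos M v"
      unfolding wreach_path_def is_path_def using prec_eq_iff by blast
    finally show ?thesis .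
  qed
  moreover have "v \<in> Wreach V E r M v"
    using assms(4) unfolding Wreach_def by simp
  ultimately show ?thesis
    using Wreach_subset[of V E r M v] M(2) by auto
qed

lemma Wreach_insert_at:
  assumes "v \<notin> set L" "v \<in> V" "k \<le> length L"
  shows "Wreach V E r (take k L @ v # drop k L) v =
    insert v {u \<in> set L. wreach_path V E r L u v \<and> pos L u < k}"
proof -
  have "filter (\<lambda>x. x \<in> set L) (take k L @ v # drop k L) = L"
    using assms(1) by (metis append_take_drop_id filter_True filter_append filter.simps(2))
  moreover have "set (take k L @ v # drop k L) = insert v (set L)"
    by (metis append_take_drop_id insert_commute list.simps(15) set_append Un_insert_right)
  ultimately show ?thesis
    using Wreach_extension[OF _ _ assms(1,2)] pos_insert_at_le_iff[OF assms(1) _ assms(3)]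
    by auto
qed

lemma bp_eq:
  assumes "v \<notin> set L" "v \<in> V"
  shows "bp V E r L v = {s \<in> set L. wreach_path V E r L s v}"
proof -
  have "Wreach V E r (placebefore L s v) v \<noteq> Wreach V E r (placeafter L s v) v
      \<longleftrightarrow> wreach_path V E r L s v" if s: "s \<in> set L" for s
  proof -
    have "Suc (pos L s) \<le> length L"
      using pos_less_length[OF s] by simp
    then have "Wreach V E r (placeafter L s v) v =
        insert v {u \<in> set L. wreach_path V E r L u v \<and> pos L u \<le> pos L s}"
      using Wreach_insert_at[OF assms] unfolding placeafter_def by (simp add: less_Suc_eq_le)
    moreover have "Wreach V E r (placebefore L s v) v =
        insert v {u \<in> set L. wreach_path V E r L u v \<and> pos L u < pos L s}"
      using Wreach_insert_at[OF assms] pos_less_length[OF s] unfolding placebefore_def by simp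
    moreover have "s \<notin> {u \<in> set L. wreach_path V E r L u v \<and> pos L u < pos L s}"
      by simp
    moreover have "{u \<in> set L. wreach_path V E r L u v \<and> pos L u \<le> pos L s} =
        {u \<in> set L. wreach_path V E r L u v \<and> pos L u < pos L s}"
      if "\<not> wreach_path V E r L s v"
      using that pos_eq_iff[OF _ s] by (auto simp: order.order_iff_strict)
    ultimately show ?thesis
      using s assms(1) by auto
  qed
  then show ?thesis
    unfolding bp_def by auto
qed

theorem lemma5:
  fixes V :: "'a set" and E :: "'a \<Rightarrow> 'a \<Rightarrow> bool" and r :: nat
    and L L' :: "'a list" and v :: 'a
  assumes "graph V E" and "r \<ge> 1"
    and "distinct L" and "set L \<subseteq> V"
    and "v \<in> V" and "v \<notin> set L"
    and "distinct L'" and "set L' = set L \<union> {v}"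
    and "restrict_ord L' (set L) = L"
  shows "Wreach V E r L' v - {v} = {s \<in> bp V E r L v. prec_eq L' s v}"
proof -
  have "Wreach V E r L' v = insert v {u \<in> set L. wreach_path V E r L u v \<and> pos L' u \<le> pos L' v}"
    using Wreach_extension[OF _ _ assms(6,5)] assms(8,9) unfolding restrict_ord_def by simp
  moreover have "prec_eq L' s v \<longleftrightarrow> pos L' s \<le> pos L' v" if "s \<in> set L" for s
    using that assms(8) unfolding prec_eq_def by simp
  ultimately show ?thesis
    using bp_eq[OF assms(6,5)] assms(6) by auto
qed

end
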